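(* Let $k \geq 3$ be an odd integer. There is a constant $c_k > 0$ depending only on $k$ such that for every integer $n > 1$ there exist a set $P$ of $n$ points in the Euclidean plane $\mathbb{R}^2$ and a set $\mathcal{L}$ of $n$ lines in $\mathbb{R}^2$ such that the incidence graph $G = (P \cup \mathcal{L}, I(P,\mathcal{L}))$ has girth at least $k+5$ and \[ |I(P,\mathcal{L})| \geq c_k\, n^{1+\frac{4}{k^2+6k-3}}. \]
   Context: For a finite set $P$ of points and a finite set $\mathcal{L}$ of lines in the plane, $I(P,\mathcal{L}) = \{(p,\ell) \in P \times \mathcal{L} : p \in \ell\}$ is the set of incidences. The incidence graph of $(P,\mathcal{L})$ is the bipartite graph with vertex classes $P$ and $\mathcal{L}$ whose edge set is $I(P,\mathcal{L})$, i.e. $p \in P$ is adjacent to $\ell \in \mathcal{L}$ iff $p \in \ell$. The girth of a graph is the length of its shortest cycle (infinite if the graph has no cycle); "girth at least $k+5$" means the graph contains no cycle of length less than $k+5$. *)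

theory Defs
  imports Complex_Main
begin

type_synonym point = "real \<times> real"

definition is_line :: "point set \<Rightarrow> bool" where
  "is_line l \<longleftrightarrow> (\<exists>a b c. (a, b) \<noteq> (0, 0) \<and> l = {(x, y). a * x + b * y = c})"

definition incidences :: "point set \<Rightarrow> point set set \<Rightarrow> (point \<times> point set) set" where
  "incidences P L = {(p, l). p \<in> P \<and> l \<in> L \<and> p \<in> l}"

text \<open>The incidence graph is bipartite, so every cycle alternates between points and
  lines.\<close>
definition incidence_cycle :: "point set \<Rightarrow> point set set \<Rightarrow> nat \<Rightarrow> bool" where
  "incidence_cycle P L m \<longleftrightarrow> (\<exists>j ps ls. m = 2 * j \<and> j \<ge> 2 \<and>
      inj_on ps {..<j} \<and> inj_on ls {..<j} \<and>
      (\<forall>i<j. ps i \<in> P \<and> ls i \<in> L \<and> ps i \<in> ls i \<and> ps ((i + 1) mod j) \<in> ls i))"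

definition girth_at_least :: "point set \<Rightarrow> point set set \<Rightarrow> nat \<Rightarrow> bool" where
  "girth_at_least P L g \<longleftrightarrow> (\<forall>m. incidence_cycle P L m \<longrightarrow> m \<ge> g)"

end

theory Submission
  imports Defs "HOL-Library.FuncSet"
begin

text \<open>
  Take the points of an \<open>m \<times> 2Rm\<close> integer grid and the lines \<open>y = a x + b\<close> with integer
  slopes \<open>1 \<le> a \<le> R\<close> and intercepts \<open>0 \<le> b < Rm\<close>; each line meets the grid in \<open>m\<close> points.
  A cycle of length \<open>2j\<close> in the incidence graph is determined by the abscissae of its
  \<open>j\<close> points, all slopes but one and a single intercept, so there are at most
  \<open>m\<^bsup>j\<^esup> R\<^bsup>j-1\<^esup> Rm\<close> of them. Keeping a random set of lines, each with probability
  \<open>m / R\<close>, and deleting one line from every surviving cycle of length at most \<open>2J\<close> leaves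
  about \<open>J m\<^bsup>2J+1\<^esup>\<close> lines and gives girth \<open>2J + 2 = k + 5\<close> with
  \<open>n\<^bsup>1 + 1/(k+4)\<^esup>\<close> incidences, which beats the required exponent when \<open>k \<ge> 5\<close>.
  For \<open>k = 3\<close> only triangles must be destroyed; the slopes of a triangle are determined by
  two of them and two abscissa differences, and deleting random slopes instead of lines
  gives the exponent \<open>1 + 1/6\<close>. The random choices are carried out by averaging over all
  subsets of a given size.
\<close>

section \<open>The deletion method\<close>

lemma binomial_diff_le:
  fixes b t N :: nat
  assumes "b \<le> t" "t \<le> N"
  shows "real ((N - b) choose (t - b)) \<le> real (N choose t) * (real t / real N) ^ b"
  using assms
proof (induction b arbitrary: N t)
  case 0
  then show ?case by simp
next
  case (Suc b)
  then obtain N' t' where N: "N = Suc N'" and t: "t = Suc t'"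
    by (metis Suc_le_D le_trans)
  have le: "b \<le> t'" "t' \<le> N'" using Suc.prems N t by auto
  have ratio_mono: "real t' / real N' \<le> real t / real N"
  proof (cases "N' = 0")
    case False
    then have "real t' * real N \<le> real t * real N'" using le N t by (simp add: algebra_simps)
    then show ?thesis using False N by (simp add: divide_simps)
  qed (simp add: N)
  have "real ((N - Suc b) choose (t - Suc b)) = real ((N' - b) choose (t' - b))" using N t by simp
  also have "\<dots> \<le> real (N' choose t') * (real t' / real N') ^ b"
    using Suc.IH le by blast
  also have "\<dots> \<le> real (N' choose t') * (real t / real N) ^ b"
    by (intro mult_left_mono power_mono ratio_mono) auto
  also have "real (N' choose t') = real (N choose t) * (real t / real N)"
    using Suc_times_binomial_eq[of N' t'] N t by (simp add: field_simps flip: of_nat_mult)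
  finally show ?case by (simp add: algebra_simps)
qed

lemma card_supersets_le:
  assumes "finite U" "B \<subseteq> U"
  shows "real (card {T. T \<subseteq> U \<and> card T = t \<and> B \<subseteq> T})
           \<le> real (card U choose t) * (real t / real (card U)) ^ card B"
proof (cases "card B \<le> t \<and> t \<le> card U")
  case False
  have "{T. T \<subseteq> U \<and> card T = t \<and> B \<subseteq> T} = {}"
  proof (rule ccontr)
    assume "{T. T \<subseteq> U \<and> card T = t \<and> B \<subseteq> T} \<noteq> {}"
    then obtain T where "T \<subseteq> U" "card T = t" "B \<subseteq> T" by blast
    then show False using False assms by (meson card_mono finite_subset)
  qed
  then have "card {T. T \<subseteq> U \<and> card T = t \<and> B \<subseteq> T} = 0" by (simp only: card.empty)
  then show ?thesis by simp
next
  case True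
  define Ss where "Ss = {S. S \<subseteq> U - B \<and> card S = t - card B}"
  have finSs: "finite Ss" unfolding Ss_def using assms(1) by simp
  have finB: "finite B" using assms by (rule finite_subset[rotated])
  have "{T. T \<subseteq> U \<and> card T = t \<and> B \<subseteq> T} \<subseteq> (\<lambda>S. S \<union> B) ` Ss"
  proof
    fix T assume "T \<in> {T. T \<subseteq> U \<and> card T = t \<and> B \<subseteq> T}"
    then have T: "T \<subseteq> U" "card T = t" "B \<subseteq> T" by simp_all
    then have "card (T - B) = t - card B" using finB by (simp add: card_Diff_subset)
    moreover have "T = (T - B) \<union> B" using T(3) by auto
    ultimately show "T \<in> (\<lambda>S. S \<union> B) ` Ss"
      unfolding Ss_def using T by (intro image_eqI[of T _ "T - B"]) auto
  qed
  then have "card {T. T \<subseteq> U \<and> card T = t \<and> B \<subseteq> T} \<le> card ((\<lambda>S. S \<union> B) ` Ss)"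
    using finSs by (intro card_mono) auto
  also have "\<dots> \<le> card Ss" using finSs by (rule card_image_le)
  also have "\<dots> = (card U - card B) choose (t - card B)"
    using n_subsets[of "U - B" "t - card B"] assms finB unfolding Ss_def
    by (simp add: card_Diff_subset)
  finally show ?thesis
    using binomial_diff_le[of "card B" t "card U"] True by linarith
qed

lemma exists_subset_few_covered:
  assumes U: "finite U" and t: "t \<le> card U" and F: "F \<subseteq> Pow U"
  shows "\<exists>T\<subseteq>U. card T = t \<and>
           real (card {B\<in>F. B \<subseteq> T}) \<le> (\<Sum>B\<in>F. (real t / real (card U)) ^ card B)"
proof -
  define Ts where "Ts = {T. T \<subseteq> U \<and> card T = t}"
  define W where "W = (\<Sum>B\<in>F. (real t / real (card U)) ^ card B)"
  have finF: "finite F" using F U by (meson finite_Pow_iff finite_subset)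
  have finTs: "finite Ts" unfolding Ts_def using U by simp
  have card_Ts: "card Ts = card U choose t" unfolding Ts_def using n_subsets[OF U] by simp
  have "(\<Sum>T\<in>Ts. real (card {B\<in>F. B \<subseteq> T})) = (\<Sum>T\<in>Ts. \<Sum>B\<in>F. of_bool (B \<subseteq> T))"
    using finF by (simp add: sum.If_cases Int_def)
  also have "\<dots> = (\<Sum>B\<in>F. \<Sum>T\<in>Ts. of_bool (B \<subseteq> T))" by (rule sum.swap)
  also have "\<dots> = (\<Sum>B\<in>F. real (card {T. T \<subseteq> U \<and> card T = t \<and> B \<subseteq> T}))"
  proof (rule sum.cong[OF refl])
    fix B
    have "{T\<in>Ts. B \<subseteq> T} = {T. T \<subseteq> U \<and> card T = t \<and> B \<subseteq> T}" unfolding Ts_def by auto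
    then show "(\<Sum>T\<in>Ts. of_bool (B \<subseteq> T)) = real (card {T. T \<subseteq> U \<and> card T = t \<and> B \<subseteq> T})"
      using finTs by (simp add: sum.If_cases Int_def)
  qed
  also have "\<dots> \<le> (\<Sum>B\<in>F. real (card Ts) * (real t / real (card U)) ^ card B)"
    using card_supersets_le[OF U] F unfolding card_Ts by (intro sum_mono) auto
  also have "\<dots> = real (card Ts) * W" unfolding W_def by (simp add: sum_distrib_left)
  finally have total: "(\<Sum>T\<in>Ts. real (card {B\<in>F. B \<subseteq> T})) \<le> real (card Ts) * W" .
  have "\<exists>T\<in>Ts. real (card {B\<in>F. B \<subseteq> T}) \<le> W"
  proof (rule ccontr)
    assume "\<not> ?thesis"
    moreover have "Ts \<noteq> {}" using card_Ts t by auto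
    ultimately have "(\<Sum>T\<in>Ts. W) < (\<Sum>T\<in>Ts. real (card {B\<in>F. B \<subseteq> T}))"
      using finTs by (intro sum_strict_mono) auto
    then show False using total by simp
  qed
  then show ?thesis unfolding Ts_def W_def by blast
qed

lemma exists_subset_avoiding_covered:
  assumes "finite T" "finite F" "\<forall>B\<in>F. B \<noteq> {}"
  shows "\<exists>T'\<subseteq>T. card T \<le> card T' + card {B\<in>F. B \<subseteq> T} \<and> (\<forall>B\<in>F. \<not> B \<subseteq> T')"
proof -
  define G where "G = {B\<in>F. B \<subseteq> T}"
  define pick where "pick B = (SOME x. x \<in> B)" for B :: "'a set"
  have pick: "pick B \<in> B" if "B \<in> F" for B
    unfolding pick_def using assms(3) that by (simp add: some_in_eq)
  define T' where "T' = T - pick ` G"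
  have finG: "finite G" unfolding G_def using assms(2) by simp
  have "card T \<le> card (T' \<union> pick ` G)"
    using assms(1) finG by (intro card_mono) (auto simp: T'_def)
  also have "\<dots> \<le> card T' + card (pick ` G)" by (rule card_Un_le)
  also have "\<dots> \<le> card T' + card G" using finG by (simp add: card_image_le)
  finally have "card T \<le> card T' + card G" .
  moreover have "\<not> B \<subseteq> T'" if "B \<in> F" for B
  proof
    assume "B \<subseteq> T'"
    then have "B \<in> G" using that unfolding G_def T'_def by blast
    then show False using pick[OF that] \<open>B \<subseteq> T'\<close> unfolding T'_def by blast
  qed
  ultimately show ?thesis unfolding G_def T'_def by blast
qed

lemma exists_subset_avoiding:
  assumes U: "finite U" and t: "t \<le> card U" and F: "F \<subseteq> Pow U" and nonempty: "\<forall>B\<in>F. B \<noteq> {}"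
  shows "\<exists>T\<subseteq>U. card T \<le> t \<and> real t - (\<Sum>B\<in>F. (real t / real (card U)) ^ card B) \<le> real (card T)
          \<and> (\<forall>B\<in>F. \<not> B \<subseteq> T)"
proof -
  obtain T where T: "T \<subseteq> U" "card T = t"
    and few: "real (card {B\<in>F. B \<subseteq> T}) \<le> (\<Sum>B\<in>F. (real t / real (card U)) ^ card B)"
    using exists_subset_few_covered[OF U t F] by blast
  have "finite F" using F U by (meson finite_Pow_iff finite_subset)
  then obtain T' where "T' \<subseteq> T" "card T \<le> card T' + card {B\<in>F. B \<subseteq> T}" "\<forall>B\<in>F. \<not> B \<subseteq> T'"
    using exists_subset_avoiding_covered[OF finite_subset[OF T(1) U] _ nonempty] by blast
  moreover have "card T' \<le> card T" using \<open>T' \<subseteq> T\<close> T U by (meson card_mono finite_subset)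
  ultimately show ?thesis using T few by (intro exI[of _ T']) auto
qed

section \<open>Grid lines and their cycles\<close>

definition line_of :: "real \<Rightarrow> real \<Rightarrow> point set" where
  "line_of a b = {p. snd p = a * fst p + b}"

lemma is_line_line_of: "is_line (line_of a b)"
  unfolding is_line_def line_of_def
  by (rule exI[of _ a], rule exI[of _ "-1"], rule exI[of _ "-b"]) auto

lemma line_of_eq_iff: "line_of a b = line_of a' b' \<longleftrightarrow> a = a' \<and> b = b'"
proof
  assume eq: "line_of a b = line_of a' b'"
  have "(0, b) \<in> line_of a b" "(1, a + b) \<in> line_of a b" by (simp_all add: line_of_def)
  then have "b = b'" "a + b = a' + b'" unfolding eq by (simp_all add: line_of_def)
  then show "a = a' \<and> b = b'" by simp
qed simp

lemma line_of_eq_if_fst_eq: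
  "p \<in> line_of a b \<Longrightarrow> q \<in> line_of a b \<Longrightarrow> fst p = fst q \<Longrightarrow> p = q"
  unfolding line_of_def by (simp add: prod_eq_iff)

definition nats_below :: "nat \<Rightarrow> real set" where
  "nats_below n = real ` {..<n}"

definition pos_nats_upto :: "nat \<Rightarrow> real set" where
  "pos_nats_upto n = real ` {1..n}"

lemma card_nats_below [simp]: "card (nats_below n) = n"
  unfolding nats_below_def by (simp add: card_image)

lemma finite_nats_below [simp]: "finite (nats_below n)"
  unfolding nats_below_def by simp

lemma card_pos_nats_upto [simp]: "card (pos_nats_upto n) = n"
  unfolding pos_nats_upto_def by (simp add: card_image)

lemma finite_pos_nats_upto [simp]: "finite (pos_nats_upto n)"
  unfolding pos_nats_upto_def by simp

definition grid :: "nat \<Rightarrow> nat \<Rightarrow> point set" where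
  "grid m Y = nats_below m \<times> nats_below Y"

text \<open>A triple \<open>(x, a, b)\<close> in \<open>line_cycles m R M j\<close> describes a cycle of length \<open>2 * j\<close>
  through grid lines: the \<open>i\<close>-th line is \<open>y = a i * x + b i\<close> and contains the cycle
  points with abscissae \<open>x i\<close> and \<open>x ((i + 1) mod j)\<close>.\<close>
definition line_cycles ::
    "nat \<Rightarrow> nat \<Rightarrow> nat \<Rightarrow> nat \<Rightarrow> ((nat \<Rightarrow> real) \<times> (nat \<Rightarrow> real) \<times> (nat \<Rightarrow> real)) set" where
  "line_cycles m R M j = {(x, a, b).
     x \<in> {..<j} \<rightarrow>\<^sub>E nats_below m \<and> a \<in> {..<j} \<rightarrow>\<^sub>E pos_nats_upto R \<and> b \<in> {..<j} \<rightarrow>\<^sub>E nats_below M \<and>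
     inj_on (\<lambda>i. (a i, b i)) {..<j} \<and>
     (\<forall>i<j. x i \<noteq> x ((i + 1) mod j) \<and>
        a i * x ((i + 1) mod j) + b i = a ((i + 1) mod j) * x ((i + 1) mod j) + b ((i + 1) mod j))}"

lemma line_cyclesD:
  assumes "(x, a, b) \<in> line_cycles m R M j" "i < j"
  shows "x i \<noteq> x ((i + 1) mod j)"
    and "a i * x ((i + 1) mod j) + b i = a ((i + 1) mod j) * x ((i + 1) mod j) + b ((i + 1) mod j)"
    and "x i \<in> nats_below m" "a i \<in> pos_nats_upto R" "b i \<in> nats_below M"
  using assms unfolding line_cycles_def by auto

lemma line_cycles_lines_distinct:
  assumes "(x, a, b) \<in> line_cycles m R M j" "i < j" "i' < j" "a i = a i'" "b i = b i'"
  shows "i = i'"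
  using assms unfolding line_cycles_def by (auto dest: inj_onD)

lemma finite_line_cycles: "finite (line_cycles m R M j)"
proof -
  have "line_cycles m R M j \<subseteq>
      ({..<j} \<rightarrow>\<^sub>E nats_below m) \<times> ({..<j} \<rightarrow>\<^sub>E pos_nats_upto R) \<times> ({..<j} \<rightarrow>\<^sub>E nats_below M)"
    unfolding line_cycles_def by auto
  then show ?thesis by (rule finite_subset) (simp add: finite_PiE)
qed

text \<open>Going once around the cycle, the differences \<open>b i - b' i\<close> all equal
  \<open>(a 0 - a' 0) * x 1\<close>, and closing the cycle at \<open>x 0 \<noteq> x 1\<close> forces \<open>a 0 = a' 0\<close>.\<close>
lemma line_cycles_eqI:
  assumes j: "j \<ge> 2" and c: "(x, a, b) \<in> line_cycles m R M j" and c': "(x, a', b') \<in> line_cycles m R M j"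
    and a: "\<forall>i\<in>{1..<j}. a i = a' i" and b0: "b 0 = b' 0"
  shows "a = a' \<and> b = b'"
proof -
  define D where "D = a 0 - a' 0"
  have diff: "b i - b' i = D * x 1" if "1 \<le> i" "i < j" for i
    using that
  proof (induction i rule: nat_induct_at_least)
    case base
    have "1 mod j = 1" using j by simp
    then show ?case
      using line_cyclesD(2)[OF c, of 0] line_cyclesD(2)[OF c', of 0] a b0 j
      unfolding D_def by (simp add: algebra_simps)
  next
    case (Suc i)
    then have "(i + 1) mod j = Suc i" by simp
    then show ?case
      using line_cyclesD(2)[OF c, of i] line_cyclesD(2)[OF c', of i] a Suc
      by (simp add: algebra_simps)
  qed
  have "(j - 1 + 1) mod j = 0" using j by simp
  then have "b (j - 1) - b' (j - 1) = D * x 0"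
    using line_cyclesD(2)[OF c, of "j - 1"] line_cyclesD(2)[OF c', of "j - 1"] a b0 j
    unfolding D_def by (simp add: algebra_simps)
  moreover have "x 0 \<noteq> x 1" using line_cyclesD(1)[OF c, of 0] j by simp
  ultimately have "D = 0" using diff[of "j - 1"] j by simp
  have "a i = a' i" "b i = b' i" if "i < j" for i
    using that a b0 diff \<open>D = 0\<close> unfolding D_def by (cases "i = 0"; simp)+
  moreover have "a \<in> {..<j} \<rightarrow>\<^sub>E pos_nats_upto R" "a' \<in> {..<j} \<rightarrow>\<^sub>E pos_nats_upto R"
      "b \<in> {..<j} \<rightarrow>\<^sub>E nats_below M" "b' \<in> {..<j} \<rightarrow>\<^sub>E nats_below M"
    using c c' unfolding line_cycles_def by auto
  ultimately show ?thesis by (auto intro: PiE_ext)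
qed

lemma card_line_cycles_le:
  assumes j: "j \<ge> 2"
  shows "card (line_cycles m R M j) \<le> m ^ j * R ^ (j - 1) * M"
proof -
  define f where "f = (\<lambda>(x::nat \<Rightarrow> real, a::nat \<Rightarrow> real, b::nat \<Rightarrow> real). (x, restrict a {1..<j}, b 0))"
  define codomain where "codomain =
    ({..<j} \<rightarrow>\<^sub>E nats_below m) \<times> ({1..<j} \<rightarrow>\<^sub>E pos_nats_upto R) \<times> nats_below M"
  have "inj_on f (line_cycles m R M j)"
  proof (rule inj_onI)
    fix u v assume u: "u \<in> line_cycles m R M j" and v: "v \<in> line_cycles m R M j" and "f u = f v"
    obtain x a b x' a' b' where uv: "u = (x, a, b)" "v = (x', a', b')" by (metis prod_cases3)
    then have "x = x'" "restrict a {1..<j} = restrict a' {1..<j}" "b 0 = b' 0"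
      using \<open>f u = f v\<close> unfolding f_def by simp_all
    moreover from this(2) have "\<forall>i\<in>{1..<j}. a i = a' i" by (metis restrict_apply')
    ultimately show "u = v" using line_cycles_eqI[OF j, of x a b m R M a' b'] u v uv by simp
  qed
  moreover have "f ` line_cycles m R M j \<subseteq> codomain"
    using j unfolding f_def codomain_def line_cycles_def by (auto simp: restrict_PiE_iff)
  moreover have "finite codomain" unfolding codomain_def by (simp add: finite_PiE)
  ultimately have "card (line_cycles m R M j) \<le> card codomain" by (rule card_inj_on_le)
  also have "card codomain = m ^ j * R ^ (j - 1) * M"
    unfolding codomain_def by (simp add: card_cartesian_product card_PiE)
  finally show ?thesis .
qed

lemma line_cycle_of_incidence_cycle:
  assumes T: "T \<subseteq> pos_nats_upto R \<times> nats_below M" and j: "j \<ge> 2"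
    and ps: "inj_on ps {..<j}" and ls: "inj_on ls {..<j}"
    and cyc: "\<forall>i<j. ps i \<in> grid m Y \<and> ls i \<in> case_prod line_of ` T \<and> ps i \<in> ls i \<and> ps ((i + 1) mod j) \<in> ls i"
  shows "\<exists>x a b. (x, a, b) \<in> line_cycles m R M j \<and> (\<lambda>i. (a i, b i)) ` {..<j} \<subseteq> T"
proof -
  have "\<forall>i\<in>{..<j}. \<exists>ab. ab \<in> T \<and> ls i = case_prod line_of ab"
    using cyc by (metis imageE lessThan_iff)
  then obtain ab where ab: "\<forall>i\<in>{..<j}. ab i \<in> T \<and> ls i = case_prod line_of (ab i)"
    by (rule bchoice[THEN exE])
  define x where "x = restrict (\<lambda>i. fst (ps i)) {..<j}"
  define a where "a = restrict (\<lambda>i. fst (ab i)) {..<j}"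
  define b where "b = restrict (\<lambda>i. snd (ab i)) {..<j}"
  have in_T: "(a i, b i) \<in> T" and ls_eq: "ls i = line_of (a i) (b i)" if "i < j" for i
    using ab that unfolding a_def b_def by (simp_all add: case_prod_beta)
  have x_mem: "x \<in> {..<j} \<rightarrow>\<^sub>E nats_below m"
    using cyc unfolding x_def grid_def by (auto simp: restrict_PiE_iff mem_Times_iff)
  have "a i \<in> pos_nats_upto R \<and> b i \<in> nats_below M" if "i < j" for i
    using in_T[OF that] T by auto
  then have ab_mem: "a \<in> {..<j} \<rightarrow>\<^sub>E pos_nats_upto R" "b \<in> {..<j} \<rightarrow>\<^sub>E nats_below M"
    unfolding a_def b_def by (auto simp: restrict_PiE_iff)
  have "inj_on (\<lambda>i. (a i, b i)) {..<j}"
    using ls ls_eq by (auto simp: inj_on_def)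
  moreover have "x i \<noteq> x ((i + 1) mod j) \<and>
      a i * x ((i + 1) mod j) + b i = a ((i + 1) mod j) * x ((i + 1) mod j) + b ((i + 1) mod j)"
    if i: "i < j" for i
  proof -
    define i' where "i' = (i + 1) mod j"
    have i': "i' < j" "i' \<noteq> i" using i j unfolding i'_def by (auto simp: mod_if)
    have on: "ps i \<in> line_of (a i) (b i)" "ps i' \<in> line_of (a i) (b i)" "ps i' \<in> line_of (a i') (b i')"
      using cyc i i' ls_eq unfolding i'_def by auto
    have "ps i \<noteq> ps i'" using ps i i' by (auto dest: inj_onD)
    then have "x i \<noteq> x i'"
      using line_of_eq_if_fst_eq[OF on(1,2)] i i' unfolding x_def by auto
    moreover have "a i * x i' + b i = a i' * x i' + b i'"
      using on(2,3) i' unfolding x_def line_of_def by auto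
    ultimately show ?thesis unfolding i'_def by blast
  qed
  ultimately have "(x, a, b) \<in> line_cycles m R M j"
    using x_mem ab_mem unfolding line_cycles_def by blast
  then show ?thesis using in_T by blast
qed

lemma girth_at_least_grid_lines:
  assumes T: "T \<subseteq> pos_nats_upto R \<times> nats_below M"
    and no_short_cycle: "\<And>j x a b. 2 \<le> j \<Longrightarrow> 2 * j < g \<Longrightarrow> (x, a, b) \<in> line_cycles m R M j \<Longrightarrow>
                           \<not> (\<lambda>i. (a i, b i)) ` {..<j} \<subseteq> T"
  shows "girth_at_least (grid m Y) (case_prod line_of ` T) g"
  unfolding girth_at_least_def
proof (intro allI impI)
  fix len assume "incidence_cycle (grid m Y) (case_prod line_of ` T) len"
  then obtain j ps ls where len: "len = 2 * j" and j: "j \<ge> 2" and ps: "inj_on ps {..<j}"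
    and ls: "inj_on ls {..<j}"
    and cyc: "\<forall>i<j. ps i \<in> grid m Y \<and> ls i \<in> case_prod line_of ` T \<and> ps i \<in> ls i \<and> ps ((i + 1) mod j) \<in> ls i"
    unfolding incidence_cycle_def by (elim exE conjE) (rule that, assumption+)
  then obtain x a b where "(x, a, b) \<in> line_cycles m R M j" "(\<lambda>i. (a i, b i)) ` {..<j} \<subseteq> T"
    using line_cycle_of_incidence_cycle[OF T j ps ls cyc] by blast
  then show "g \<le> len" using no_short_cycle[OF j] len by fastforce
qed

lemma card_incidences_grid_lines:
  assumes T: "T \<subseteq> pos_nats_upto R \<times> nats_below M" and Y: "M + R * m \<le> Y"
  shows "m * card T \<le> card (incidences (grid m Y) (case_prod line_of ` T))"
proof -
  define f where "f = (\<lambda>((a, b), x). ((x, a * x + b), line_of a b))"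
  have finT: "finite T" using T by (rule finite_subset) simp
  have "inj_on f (T \<times> nats_below m)"
    unfolding f_def by (rule inj_onI) (auto simp: line_of_eq_iff)
  moreover have "f ` (T \<times> nats_below m) \<subseteq> incidences (grid m Y) (case_prod line_of ` T)"
  proof (rule image_subsetI)
    fix u assume "u \<in> T \<times> nats_below m"
    then obtain a b x where u: "u = ((a, b), x)" and ab: "(a, b) \<in> T" and x: "x \<in> nats_below m"
      by (metis mem_Times_iff prod.collapse)
    have "a \<in> real ` {1..R}" "b \<in> real ` {..<M}" "x \<in> real ` {..<m}"
      using ab T x unfolding pos_nats_upto_def nats_below_def by auto
    then obtain \<alpha> \<beta> \<xi> where \<alpha>: "a = real \<alpha>" "\<alpha> \<le> R" and \<beta>: "b = real \<beta>" "\<beta> < M"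
      and \<xi>: "x = real \<xi>" "\<xi> < m"
      by auto
    have "\<alpha> * \<xi> + \<beta> < Y" using mult_le_mono[OF \<alpha>(2) less_imp_le[OF \<xi>(2)]] \<beta>(2) Y by linarith
    then have "a * x + b \<in> nats_below Y"
      unfolding nats_below_def \<alpha> \<beta> \<xi> by (auto intro: image_eqI[where x = "\<alpha> * \<xi> + \<beta>"])
    then show "f u \<in> incidences (grid m Y) (case_prod line_of ` T)"
      using ab x unfolding u f_def incidences_def grid_def line_of_def by force
  qed
  moreover have "finite (incidences (grid m Y) (case_prod line_of ` T))"
  proof (rule finite_subset)
    show "incidences (grid m Y) (case_prod line_of ` T) \<subseteq> grid m Y \<times> case_prod line_of ` T"
      unfolding incidences_def by auto
  qed (simp add: grid_def finT)
  ultimately have "card (T \<times> nats_below m) \<le> card (incidences (grid m Y) (case_prod line_of ` T))"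
    by (rule card_inj_on_le)
  then show ?thesis by (simp add: card_cartesian_product finT mult.commute)
qed

definition has_config :: "nat \<Rightarrow> nat \<Rightarrow> real \<Rightarrow> bool" where
  "has_config g n I \<longleftrightarrow> (\<exists>P L. card P = n \<and> card L = n \<and> (\<forall>l\<in>L. is_line l) \<and>
     girth_at_least P L g \<and> I \<le> real (card (incidences P L)))"

lemma has_config_mono: "has_config g n I \<Longrightarrow> I' \<le> I \<Longrightarrow> has_config g n I'"
  unfolding has_config_def by (blast intro: order_trans)

lemma girth_at_least_Un_isolated:
  assumes "girth_at_least P L g"
    and Q: "\<forall>q\<in>Q. \<forall>l\<in>L \<union> H. q \<notin> l" and H: "\<forall>h\<in>H. \<forall>p\<in>P. p \<notin> h"
  shows "girth_at_least (P \<union> Q) (L \<union> H) g"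
  unfolding girth_at_least_def
proof (intro allI impI)
  fix len assume "incidence_cycle (P \<union> Q) (L \<union> H) len"
  then obtain j ps ls where cyc: "len = 2 * j \<and> j \<ge> 2 \<and> inj_on ps {..<j} \<and> inj_on ls {..<j} \<and>
      (\<forall>i<j. ps i \<in> P \<union> Q \<and> ls i \<in> L \<union> H \<and> ps i \<in> ls i \<and> ps ((i + 1) mod j) \<in> ls i)"
    unfolding incidence_cycle_def by blast
  then have "ps i \<in> P \<and> ls i \<in> L" if "i < j" for i
    using that Q H by blast
  then have "incidence_cycle P L len"
    unfolding incidence_cycle_def using cyc by blast
  then show "g \<le> len" using assms(1) unfolding girth_at_least_def by blast
qed

lemma has_config_Un_isolated:
  assumes finite: "finite P" "finite L" "finite Q" "finite H"
    and disjoint: "P \<inter> Q = {}" "L \<inter> H = {}" and card: "card P + card Q = n" "card L + card H = n"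
    and lines: "\<forall>l\<in>L \<union> H. is_line l" and girth: "girth_at_least P L g"
    and I: "I \<le> real (card (incidences P L))"
    and isolated: "\<forall>q\<in>Q. \<forall>l\<in>L \<union> H. q \<notin> l" "\<forall>h\<in>H. \<forall>p\<in>P. p \<notin> h"
  shows "has_config g n I"
proof -
  have "card (P \<union> Q) = n" "card (L \<union> H) = n"
    using card_Un_disjoint[OF finite(1,3) disjoint(1)] card_Un_disjoint[OF finite(2,4) disjoint(2)] card
    by simp_all
  moreover have "card (incidences P L) \<le> card (incidences (P \<union> Q) (L \<union> H))"
  proof (rule card_mono)
    show "finite (incidences (P \<union> Q) (L \<union> H))"
      by (rule finite_subset[where B = "(P \<union> Q) \<times> (L \<union> H)"]) (auto simp: incidences_def finite)
  qed (auto simp: incidences_def)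
  ultimately show ?thesis
    unfolding has_config_def using I lines girth_at_least_Un_isolated[OF girth isolated]
    by (intro exI[of _ "P \<union> Q"] exI[of _ "L \<union> H"]) auto
qed

text \<open>The padding vertices are isolated: points far left on the line \<open>y = y_max\<close>, which the
  given lines only meet to the right, and horizontal lines above \<open>y_max\<close>.\<close>
lemma has_config_padding:
  assumes finite: "finite P" "finite L" and card: "card P \<le> n" "card L \<le> n"
    and lines: "\<forall>l\<in>L. is_line l" and girth: "girth_at_least P L g"
    and I: "I \<le> real (card (incidences P L))"
    and below: "\<forall>p\<in>P. snd p < y_max" "\<forall>l\<in>L. \<exists>p\<in>l. snd p < y_max"
    and left_below: "\<forall>l\<in>L. \<forall>p\<in>l. fst p < 0 \<longrightarrow> snd p < y_max"
  shows "has_config g n I"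
proof -
  define Q where "Q = (\<lambda>i::nat. (- real i - 1, y_max)) ` {..< n - card P}"
  define H where "H = (\<lambda>i::nat. line_of 0 (y_max + 1 + real i)) ` {..< n - card L}"
  have above: "y_max < snd p" if "p \<in> h" "h \<in> H" for p h
    using that unfolding H_def line_of_def by auto
  show ?thesis
  proof (rule has_config_Un_isolated[OF finite _ _ _ _ _ _ _ girth I])
    show "finite Q" "finite H" unfolding Q_def H_def by simp_all
    have "card Q = n - card P" unfolding Q_def by (subst card_image) (auto simp: inj_on_def)
    then show "card P + card Q = n" using card(1) by simp
    have "card H = n - card L" unfolding H_def
      by (subst card_image) (auto simp: inj_on_def line_of_eq_iff)
    then show "card L + card H = n" using card(2) by simp
    show "P \<inter> Q = {}" using below(1) unfolding Q_def by auto
    show "L \<inter> H = {}"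
    proof (rule equals0I)
      fix l assume l: "l \<in> L \<inter> H"
      then obtain p where "p \<in> l" "snd p < y_max" using below(2) by blast
      moreover have "y_max < snd p" using above \<open>p \<in> l\<close> l by blast
      ultimately show False by simp
    qed
    show "\<forall>l\<in>L \<union> H. is_line l" using lines is_line_line_of unfolding H_def by blast
    show "\<forall>h\<in>H. \<forall>p\<in>P. p \<notin> h"
    proof (intro ballI notI)
      fix h p assume "h \<in> H" "p \<in> P" "p \<in> h"
      then have "y_max < snd p" "snd p < y_max" using above below(1) by blast+
      then show False by simp
    qed
    show "\<forall>q\<in>Q. \<forall>l\<in>L \<union> H. q \<notin> l"
    proof (intro ballI notI)
      fix q l assume "q \<in> Q" "l \<in> L \<union> H" "q \<in> l"
      have "fst q < 0" "snd q = y_max" using \<open>q \<in> Q\<close> unfolding Q_def by auto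
      then show False
        using \<open>l \<in> L \<union> H\<close> left_below above[OF \<open>q \<in> l\<close>] \<open>q \<in> l\<close> by auto
    qed
  qed
qed

lemma has_config_grid:
  assumes T: "T \<subseteq> pos_nats_upto R \<times> nats_below M"
    and n: "m * (M + R * m) \<le> n" "card T \<le> n"
    and girth: "girth_at_least (grid m (M + R * m)) (case_prod line_of ` T) g"
  shows "has_config g n (real (m * card T))"
proof (rule has_config_padding[where y_max = "real (M + R * m)"])
  have "finite T" using T by (rule finite_subset) simp
  then show "finite (grid m (M + R * m))" "finite (case_prod line_of ` T)"
    "card (case_prod line_of ` T) \<le> n"
    using n(2) card_image_le[of T "case_prod line_of"] by (simp_all add: grid_def)
  show "card (grid m (M + R * m)) \<le> n" using n(1) by (simp add: grid_def card_cartesian_product)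
  show "real (m * card T) \<le> real (card (incidences (grid m (M + R * m)) (case_prod line_of ` T)))"
    using card_incidences_grid_lines[OF T, of m] of_nat_mono by blast
  show "\<forall>p\<in>grid m (M + R * m). snd p < real (M + R * m)"
    unfolding grid_def nats_below_def by (auto simp del: of_nat_add of_nat_mult)
  show "\<forall>l\<in>case_prod line_of ` T. \<forall>p\<in>l. fst p < 0 \<longrightarrow> snd p < real (M + R * m)"
  proof (intro ballI impI)
    fix l p assume "l \<in> case_prod line_of ` T" "p \<in> l" "fst p < 0"
    then obtain a b where "(a, b) \<in> T" "l = line_of a b" by auto
    then have "a \<ge> 1" "b < real M" "snd p = a * fst p + b"
      using T \<open>p \<in> l\<close> unfolding pos_nats_upto_def nats_below_def line_of_def by auto
    moreover have "a * fst p < 0" using \<open>a \<ge> 1\<close> \<open>fst p < 0\<close> by (simp add: mult_pos_neg)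
    moreover have "real M \<le> real (M + R * m)" by simp
    ultimately show "snd p < real (M + R * m)" by linarith
  qed
  show "\<forall>l\<in>case_prod line_of ` T. \<exists>p\<in>l. snd p < real (M + R * m)"
  proof
    fix l assume "l \<in> case_prod line_of ` T"
    then obtain a b where "(a, b) \<in> T" "l = line_of a b" by auto
    then have "(0, b) \<in> l" "b < real M"
      using T unfolding line_of_def nats_below_def by auto
    moreover have "real M \<le> real (M + R * m)" by simp
    ultimately show "\<exists>p\<in>l. snd p < real (M + R * m)"
      by (intro bexI[of _ "(0, b)"]) (simp_all del: of_nat_add)
  qed
qed (use girth is_line_line_of in auto)

lemma has_config_single_line:
  assumes "n \<ge> 2"
  shows "has_config g n 1"
proof -
  have T: "{(1, 0)} \<subseteq> pos_nats_upto 1 \<times> nats_below 1"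
    unfolding pos_nats_upto_def nats_below_def by force
  have "girth_at_least (grid 1 2) (case_prod line_of ` {(1, 0)}) g"
  proof (rule girth_at_least_grid_lines[OF T])
    fix j x a b assume "2 \<le> j" "(x, a, b) \<in> line_cycles 1 1 1 j"
    then have two: "card ((\<lambda>i. (a i, b i)) ` {..<j}) \<ge> 2"
      unfolding line_cycles_def by (simp add: card_image)
    show "\<not> (\<lambda>i. (a i, b i)) ` {..<j} \<subseteq> {(1, 0)}"
    proof
      assume "(\<lambda>i. (a i, b i)) ` {..<j} \<subseteq> {(1, 0)}"
      then have "card ((\<lambda>i. (a i, b i)) ` {..<j}) \<le> card {(1::real, 0::real)}"
        by (rule card_mono[rotated]) simp
      then show False using two by simp
    qed
  qed
  then show ?thesis using has_config_grid[OF T, of 1 n] assms by (simp add: numeral_2_eq_2)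
qed

lemma powr_one_plus_le_power:
  fixes x y e :: real and E :: nat
  assumes x: "1 \<le> x" "x \<le> y ^ E" and y: "0 \<le> y" and E: "E \<ge> 1" and e: "0 \<le> e" "e \<le> 1 / E"
  shows "x powr (1 + e) \<le> y ^ (E + 1)"
proof -
  have "x powr (1 / E) \<le> (y ^ E) powr (1 / E)" using x E by (intro powr_mono2) auto
  also have "\<dots> = y"
  proof (cases "y = 0")
    case False
    then have "y ^ E = y powr real E" using y by (simp add: powr_realpow)
    then show ?thesis using E y by (simp add: powr_powr)
  qed (use E in simp)
  finally have root: "x powr (1 / E) \<le> y" .
  have "x powr (1 + e) \<le> x powr (1 + 1 / E)" using x e by (intro powr_mono) auto
  also have "\<dots> = x * x powr (1 / E)" using x by (simp add: powr_add)
  also have "\<dots> \<le> y ^ E * y" using x root y by (intro mult_mono) auto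
  finally show ?thesis by (simp add: mult.commute)
qed

lemma exists_scale:
  fixes K E n :: nat
  assumes K: "K \<ge> 1" and E: "E \<ge> 1" and n: "K \<le> n"
  shows "\<exists>m\<ge>1. K * m ^ E \<le> n \<and> real n < (real K * 2 ^ E * real m) ^ E"
proof -
  have bounded: "y \<le> n" if "1 \<le> y \<and> K * y ^ E \<le> n" for y
  proof -
    have "y \<le> y ^ E" using that E by (simp add: self_le_power)
    also have "\<dots> \<le> K * y ^ E" using K by simp
    finally show ?thesis using that by simp
  qed
  obtain m where m: "1 \<le> m \<and> K * m ^ E \<le> n"
    and greatest: "\<And>y. 1 \<le> y \<and> K * y ^ E \<le> n \<Longrightarrow> y \<le> m"
    using Nat.ex_has_greatest_nat[of "\<lambda>m. 1 \<le> m \<and> K * m ^ E \<le> n" 1 n] n bounded by auto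
  have "\<not> K * (m + 1) ^ E \<le> n" using greatest[of "m + 1"] by auto
  then have "real n < real (K * (m + 1) ^ E)" by (simp only: of_nat_less_iff not_le)
  also have "\<dots> = real K * (real m + 1) ^ E" by (simp add: add.commute)
  also have "\<dots> \<le> real K * (2 * real m) ^ E" using m by (intro mult_left_mono power_mono) auto
  also have "\<dots> = (real K * 2 ^ E) * real m ^ E" by (simp add: power_mult_distrib)
  also have "\<dots> \<le> (real K * 2 ^ E) ^ E * real m ^ E"
  proof (rule mult_right_mono)
    have "1 \<le> real K * 2 ^ E" using K by (simp add: mult_ge1_I one_le_power)
    then show "real K * 2 ^ E \<le> (real K * 2 ^ E) ^ E" using E by (simp add: self_le_power)
  qed simp
  finally show ?thesis using m by (auto simp: power_mult_distrib)
qed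

text \<open>Every \<open>n\<close> is rounded down to the largest scale \<open>K m ^ E \<le> n\<close>.\<close>
lemma has_config_powr:
  fixes K E :: nat and c\<^sub>0 e :: real
  assumes K: "K \<ge> 1" and E: "E \<ge> 1" and c\<^sub>0: "c\<^sub>0 > 0" and e: "0 \<le> e" "e \<le> 1 / E"
    and config: "\<And>m n. m \<ge> 1 \<Longrightarrow> K * m ^ E \<le> n \<Longrightarrow> has_config g n (c\<^sub>0 * real m ^ (E + 1))"
  shows "\<exists>c>0. \<forall>n. n > 1 \<longrightarrow> has_config g n (c * real n powr (1 + e))"
proof -
  define C where "C = real K * 2 ^ E"
  have C: "C \<ge> 1" unfolding C_def using K by (simp add: one_le_power mult_ge1_I)
  define c where "c = min (1 / real K ^ 2) (c\<^sub>0 / C ^ (E + 1))"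
  have c: "c > 0" unfolding c_def using K c\<^sub>0 C by simp
  have "1 / real E \<le> 1" using E by simp
  then have e1: "e \<le> 1 / real (1::nat)" using e by simp
  have "has_config g n (c * real n powr (1 + e))" if n: "n > 1" for n
  proof (cases "n < K")
    case True
    have "real n powr (1 + e) \<le> real K ^ 2"
      using powr_one_plus_le_power[of "real n" "real K" 1 e] True n e(1) e1
      by (simp add: power2_eq_square)
    then have "c * real n powr (1 + e) \<le> 1 / real K ^ 2 * real K ^ 2"
      using c by (intro mult_mono) (auto simp: c_def)
    then show ?thesis using K n has_config_mono[OF has_config_single_line] by simp
  next
    case False
    then have "K \<le> n" by simp
    then obtain m where m: "m \<ge> 1" "K * m ^ E \<le> n" and n_lt: "real n < (C * real m) ^ E"
      using exists_scale[OF K E] unfolding C_def by blast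
    have "real n powr (1 + e) \<le> (C * real m) ^ (E + 1)"
      using n n_lt C E e by (intro powr_one_plus_le_power) auto
    then have "c * real n powr (1 + e) \<le> c\<^sub>0 / C ^ (E + 1) * (C * real m) ^ (E + 1)"
      using c by (intro mult_mono) (auto simp: c_def)
    also have "\<dots> = c\<^sub>0 * real m ^ (E + 1)" using C by (simp add: power_mult_distrib)
    finally show ?thesis using config[OF m] has_config_mono by blast
  qed
  then show ?thesis using c by blast
qed

section \<open>Girth \<open>2 J + 2\<close> by deleting lines\<close>

definition cycle_line_sets :: "nat \<Rightarrow> nat \<Rightarrow> nat \<Rightarrow> nat \<Rightarrow> (real \<times> real) set set" where
  "cycle_line_sets m R M j = (\<lambda>(x, a, b). (\<lambda>i. (a i, b i)) ` {..<j}) ` line_cycles m R M j"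

lemma card_mem_cycle_line_sets: "B \<in> cycle_line_sets m R M j \<Longrightarrow> card B = j"
  unfolding cycle_line_sets_def line_cycles_def by (auto simp: card_image)

lemma cycle_line_sets_subset: "B \<in> cycle_line_sets m R M j \<Longrightarrow> B \<subseteq> pos_nats_upto R \<times> nats_below M"
  unfolding cycle_line_sets_def line_cycles_def by (auto simp: PiE_iff)

lemma finite_cycle_line_sets: "finite (cycle_line_sets m R M j)"
  unfolding cycle_line_sets_def using finite_line_cycles by simp

text \<open>The expected number of \<open>j\<close>-cycles surviving when each slope-intercept pair is kept
  with probability \<open>m / R\<close>.\<close>
lemma cycle_line_sets_weight_le:
  assumes j: "j \<ge> 2" and R: "R \<ge> 1"
  shows "(\<Sum>B\<in>cycle_line_sets m R (R * m) j. (real m / real R) ^ card B) \<le> real m ^ (2 * j + 1)"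
proof -
  have "(\<Sum>B\<in>cycle_line_sets m R (R * m) j. (real m / real R) ^ card B)
      = real (card (cycle_line_sets m R (R * m) j)) * (real m / real R) ^ j"
    by (simp add: card_mem_cycle_line_sets)
  also have "\<dots> \<le> real (m ^ j * R ^ (j - 1) * (R * m)) * (real m / real R) ^ j"
  proof (rule mult_right_mono)
    have "card (cycle_line_sets m R (R * m) j) \<le> card (line_cycles m R (R * m) j)"
      unfolding cycle_line_sets_def using finite_line_cycles by (rule card_image_le)
    then show "real (card (cycle_line_sets m R (R * m) j)) \<le> real (m ^ j * R ^ (j - 1) * (R * m))"
      using card_line_cycles_le[OF j, of m R "R * m"] by linarith
  qed simp
  also have "\<dots> = real m ^ j * (real R ^ (j - 1) * real R) * real m * (real m ^ j / real R ^ j)"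
    by (simp add: power_divide algebra_simps)
  also have "real R ^ (j - 1) * real R = real R ^ j" using j by (simp flip: power_Suc2)
  also have "real m ^ j * real R ^ j * real m * (real m ^ j / real R ^ j) = real m ^ (2 * j + 1)"
    using R by (simp add: power_add mult_2)
  finally show ?thesis .
qed

lemma short_cycle_line_sets_weight_le:
  assumes J: "J \<ge> 2" and R: "R \<ge> 1" and m: "m \<ge> 1"
  shows "(\<Sum>B\<in>(\<Union>j\<in>{2..J}. cycle_line_sets m R (R * m) j). (real m / real R) ^ card B)
           \<le> real J * real m ^ (2 * J + 1)"
proof -
  have "(\<Sum>B\<in>(\<Union>j\<in>{2..J}. cycle_line_sets m R (R * m) j). (real m / real R) ^ card B)
      = (\<Sum>j\<in>{2..J}. \<Sum>B\<in>cycle_line_sets m R (R * m) j. (real m / real R) ^ card B)"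
  proof (rule sum.UNION_disjoint)
    show "\<forall>i\<in>{2..J}. \<forall>j\<in>{2..J}. i \<noteq> j \<longrightarrow>
        cycle_line_sets m R (R * m) i \<inter> cycle_line_sets m R (R * m) j = {}"
      using card_mem_cycle_line_sets by blast
  qed (simp_all add: finite_cycle_line_sets)
  also have "\<dots> \<le> (\<Sum>j\<in>{2..J}. real m ^ (2 * J + 1))"
  proof (rule sum_mono)
    fix j assume j: "j \<in> {2..J}"
    then have "(\<Sum>B\<in>cycle_line_sets m R (R * m) j. (real m / real R) ^ card B) \<le> real m ^ (2 * j + 1)"
      using cycle_line_sets_weight_le R by simp
    also have "\<dots> \<le> real m ^ (2 * J + 1)" using j m by (intro power_increasing) auto
    finally show "(\<Sum>B\<in>cycle_line_sets m R (R * m) j. (real m / real R) ^ card B)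
        \<le> real m ^ (2 * J + 1)" .
  qed
  also have "\<dots> \<le> real J * real m ^ (2 * J + 1)" by (simp add: mult_right_mono)
  finally show ?thesis .
qed

text \<open>Lines: a random \<open>2 J m\<^bsup>2J+1\<^esup>\<close>-subset of the \<open>R \<times> R m\<close> slope-intercept pairs,
  \<open>R = 2 J m\<^bsup>2J-1\<^esup>\<close>, so that each pair is chosen with probability \<open>m / R\<close> and on average
  at most half of the lines have to be deleted to destroy all cycles of length at most \<open>2 J\<close>.\<close>
lemma has_config_even_girth:
  fixes J m n :: nat
  assumes J: "J \<ge> 2" and m: "m \<ge> 1" and n: "4 * J * m ^ (2 * J + 1) \<le> n"
  shows "has_config (2 * J + 2) n (real J * real m ^ (2 * J + 2))"
proof -
  define R where "R = 2 * J * m ^ (2 * J - 1)"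
  define U where "U = pos_nats_upto R \<times> nats_below (R * m)"
  define t where "t = 2 * J * m ^ (2 * J + 1)"
  define F where "F = (\<Union>j\<in>{2..J}. cycle_line_sets m R (R * m) j)"
  have R: "R \<ge> 1" unfolding R_def using J m by simp
  have "m ^ (2 * J + 1) = m ^ (2 * J - 1) * m ^ 2" using J by (simp flip: power_add)
  then have t_eq: "t = R * m ^ 2" unfolding t_def R_def by (simp add: mult.assoc)
  have card_U: "card U = R * (R * m)" unfolding U_def by (simp add: card_cartesian_product)
  have "m \<le> m ^ (2 * J - 1)" using J m by (simp add: self_le_power)
  also have "\<dots> \<le> R" unfolding R_def using J by simp
  finally have t_le: "t \<le> card U" unfolding card_U t_eq by (simp add: power2_eq_square)
  have finite_U: "finite U" unfolding U_def by simp
  have F_sub: "F \<subseteq> Pow U" unfolding F_def U_def using cycle_line_sets_subset by blast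
  have F_nonempty: "\<forall>B\<in>F. B \<noteq> {}"
  proof
    fix B assume "B \<in> F"
    then obtain j where "j \<ge> 2" "B \<in> cycle_line_sets m R (R * m) j" unfolding F_def by auto
    then show "B \<noteq> {}" using card_mem_cycle_line_sets by force
  qed
  obtain T where T: "T \<subseteq> U" "card T \<le> t"
    and many: "real t - (\<Sum>B\<in>F. (real t / real (card U)) ^ card B) \<le> real (card T)"
    and avoid: "\<forall>B\<in>F. \<not> B \<subseteq> T"
    using exists_subset_avoiding[OF finite_U t_le F_sub F_nonempty] by blast
  have "real t / real (card U) = real m / real R"
    unfolding card_U t_eq using R m by (simp add: power2_eq_square)
  then have "(\<Sum>B\<in>F. (real t / real (card U)) ^ card B) \<le> real J * real m ^ (2 * J + 1)"
    unfolding F_def using short_cycle_line_sets_weight_le[OF J R m] by simp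
  then have "real J * real m ^ (2 * J + 1) \<le> real (card T)"
    using many unfolding t_def by simp
  then have "real (m * card T) \<ge> real J * real m ^ (2 * J + 2)"
    using m by (simp add: mult_left_mono)
  moreover have "has_config (2 * J + 2) n (real (m * card T))"
  proof (rule has_config_grid)
    show "T \<subseteq> pos_nats_upto R \<times> nats_below (R * m)" using T U_def by simp
    have "m * (R * m + R * m) = 2 * t" unfolding t_eq by (simp add: power2_eq_square)
    also have "\<dots> = 4 * J * m ^ (2 * J + 1)" unfolding t_def by simp
    finally show "m * (R * m + R * m) \<le> n" using n by (simp only:)
    show "card T \<le> n" using n T(2) unfolding t_def by simp
    show "girth_at_least (grid m (R * m + R * m)) (case_prod line_of ` T) (2 * J + 2)"
    proof (rule girth_at_least_grid_lines)
      fix j x a b assume "2 \<le> j" "2 * j < 2 * J + 2" "(x, a, b) \<in> line_cycles m R (R * m) j"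
      then have "(\<lambda>i. (a i, b i)) ` {..<j} \<in> cycle_line_sets m R (R * m) j"
        unfolding cycle_line_sets_def by (auto intro: image_eqI[where x = "(x, a, b)"])
      then have "(\<lambda>i. (a i, b i)) ` {..<j} \<in> F"
        unfolding F_def using \<open>2 \<le> j\<close> \<open>2 * j < 2 * J + 2\<close> by auto
      then show "\<not> (\<lambda>i. (a i, b i)) ` {..<j} \<subseteq> T" using avoid by blast
    qed (use T U_def in simp)
  qed
  ultimately show ?thesis using has_config_mono by blast
qed

section \<open>Girth 8 by deleting slopes\<close>

lemma line_cycles_slope_neq:
  assumes c: "(x, a, b) \<in> line_cycles m R M j" and i: "i < j"
  shows "a i \<noteq> a ((i + 1) mod j)"
proof
  assume eq: "a i = a ((i + 1) mod j)"
  then have "b i = b ((i + 1) mod j)" using line_cyclesD(2)[OF c i] by simp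
  moreover have "i \<noteq> (i + 1) mod j" using line_cyclesD(1)[OF c i] by auto
  moreover have "(i + 1) mod j < j" using i by simp
  ultimately show False using line_cycles_lines_distinct[OF c i] eq by blast
qed

lemma line_cycles_two_empty: "line_cycles m R M 2 = {}"
proof (rule equals0I)
  fix c assume "c \<in> line_cycles m R M 2"
  moreover obtain x a b where "c = (x, a, b)" by (metis prod_cases3)
  ultimately have c: "(x, a, b) \<in> line_cycles m R M 2" by simp
  have "a 0 * x 1 + b 0 = a 1 * x 1 + b 1" "a 1 * x 0 + b 1 = a 0 * x 0 + b 0"
    using line_cyclesD(2)[OF c, of 0] line_cyclesD(2)[OF c, of 1] by simp_all
  then have "(a 0 - a 1) * (x 1 - x 0) = 0" by (simp add: algebra_simps)
  moreover have "a 0 \<noteq> a 1" using line_cycles_slope_neq[OF c, of 0] by simp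
  moreover have "x 0 \<noteq> x 1" using line_cyclesD(1)[OF c, of 0] by simp
  ultimately show False by simp
qed

definition triangle_slope_sets :: "nat \<Rightarrow> nat \<Rightarrow> nat \<Rightarrow> real set set" where
  "triangle_slope_sets m R M = (\<lambda>(x, a, b). {a 0, a 1, a 2}) ` line_cycles m R M 3"

definition abscissa_diffs :: "nat \<Rightarrow> real set" where
  "abscissa_diffs m = real_of_int ` {- (int m - 1)..int m - 1}"

lemma card_abscissa_diffs_le: "card (abscissa_diffs m) \<le> 2 * m"
proof -
  have "card (abscissa_diffs m) \<le> card {- (int m - 1)..int m - 1}"
    unfolding abscissa_diffs_def by (rule card_image_le) simp
  also have "\<dots> \<le> 2 * m" by simp
  finally show ?thesis .
qed

lemma diff_mem_abscissa_diffs: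
  assumes "x \<in> nats_below m" "y \<in> nats_below m"
  shows "y - x \<in> abscissa_diffs m"
proof -
  obtain u v where "x = real u" "u < m" "y = real v" "v < m"
    using assms unfolding nats_below_def by auto
  then have "y - x = real_of_int (int v - int u)" "int v - int u \<in> {- (int m - 1)..int m - 1}"
    by auto
  then show ?thesis unfolding abscissa_diffs_def by blast
qed

lemma triangle_slope_setsE:
  assumes "B \<in> triangle_slope_sets m R M"
  obtains x a b where "(x, a, b) \<in> line_cycles m R M 3" "B = {a 0, a 1, a 2}"
  using assms unfolding triangle_slope_sets_def by auto

lemma card_mem_triangle_slope_sets:
  assumes "B \<in> triangle_slope_sets m R M"
  shows "card B = 3"
proof -
  obtain x a b where c: "(x, a, b) \<in> line_cycles m R M 3" and B: "B = {a 0, a 1, a 2}"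
    using assms by (rule triangle_slope_setsE)
  have "a 0 \<noteq> a 1" "a 1 \<noteq> a 2" "a 2 \<noteq> a 0"
    using line_cycles_slope_neq[OF c, of 0] line_cycles_slope_neq[OF c, of 1]
      line_cycles_slope_neq[OF c, of 2] by (simp_all add: numeral_2_eq_2)
  then show ?thesis unfolding B by (simp add: numeral_2_eq_2)
qed

lemma triangle_slope_sets_subset:
  assumes "B \<in> triangle_slope_sets m R M"
  shows "B \<subseteq> pos_nats_upto R"
proof -
  obtain x a b where c: "(x, a, b) \<in> line_cycles m R M 3" and B: "B = {a 0, a 1, a 2}"
    using assms by (rule triangle_slope_setsE)
  show ?thesis unfolding B using line_cyclesD(4)[OF c, of 0] line_cyclesD(4)[OF c, of 1]
      line_cyclesD(4)[OF c, of 2] by simp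
qed

text \<open>The three meeting conditions of a triangle determine its first slope from the other two
  and the two abscissa differences \<open>d\<^sub>0 = x 1 - x 0\<close>, \<open>d\<^sub>1 = x 2 - x 1\<close>.\<close>
lemma card_triangle_slope_sets_le:
  "card (triangle_slope_sets m R M) \<le> R * R * (2 * m) * (2 * m)"
proof -
  define D where "D = pos_nats_upto R \<times> pos_nats_upto R \<times> abscissa_diffs m \<times> abscissa_diffs m"
  define slopes where "slopes = (\<lambda>(a\<^sub>1, a\<^sub>2, d\<^sub>0, d\<^sub>1 :: real). {(a\<^sub>2 * (d\<^sub>0 + d\<^sub>1) - a\<^sub>1 * d\<^sub>1) / d\<^sub>0, a\<^sub>1, a\<^sub>2})"
  have "triangle_slope_sets m R M \<subseteq> slopes ` D"
  proof
    fix B assume "B \<in> triangle_slope_sets m R M"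
    then obtain x a b where c: "(x, a, b) \<in> line_cycles m R M 3" and B: "B = {a 0, a 1, a 2}"
      by (rule triangle_slope_setsE)
    define d\<^sub>0 where "d\<^sub>0 = x 1 - x 0"
    define d\<^sub>1 where "d\<^sub>1 = x 2 - x 1"
    have "a 0 * x 1 + b 0 = a 1 * x 1 + b 1" "a 1 * x 2 + b 1 = a 2 * x 2 + b 2"
      "a 2 * x 0 + b 2 = a 0 * x 0 + b 0"
      using line_cyclesD(2)[OF c, of 0] line_cyclesD(2)[OF c, of 1] line_cyclesD(2)[OF c, of 2]
      by (simp_all add: numeral_2_eq_2)
    then have "a 0 * d\<^sub>0 = a 2 * (d\<^sub>0 + d\<^sub>1) - a 1 * d\<^sub>1"
      unfolding d\<^sub>0_def d\<^sub>1_def by (simp add: algebra_simps)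
    moreover have "d\<^sub>0 \<noteq> 0" using line_cyclesD(1)[OF c, of 0] unfolding d\<^sub>0_def by simp
    ultimately have "(a 2 * (d\<^sub>0 + d\<^sub>1) - a 1 * d\<^sub>1) / d\<^sub>0 = a 0" by (simp add: field_simps)
    then have "B = slopes (a 1, a 2, d\<^sub>0, d\<^sub>1)" unfolding B slopes_def by simp
    moreover have "(a 1, a 2, d\<^sub>0, d\<^sub>1) \<in> D"
      unfolding D_def d\<^sub>0_def d\<^sub>1_def
      using line_cyclesD(3,4)[OF c] diff_mem_abscissa_diffs by simp
    ultimately show "B \<in> slopes ` D" by blast
  qed
  then have "card (triangle_slope_sets m R M) \<le> card (slopes ` D)"
    by (rule card_mono[rotated]) (simp add: D_def abscissa_diffs_def)
  also have "\<dots> \<le> card D" by (rule card_image_le) (simp add: D_def abscissa_diffs_def)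
  also have "\<dots> = R * R * card (abscissa_diffs m) * card (abscissa_diffs m)"
    unfolding D_def by (simp add: card_cartesian_product)
  also have "\<dots> \<le> R * R * (2 * m) * (2 * m)"
    using card_abscissa_diffs_le[of m] by (intro mult_mono) auto
  finally show ?thesis .
qed

lemma triangle_slope_sets_weight_le:
  assumes "R \<ge> 1"
  shows "(\<Sum>B\<in>triangle_slope_sets m R M. (real (2 * m) / real R) ^ card B) \<le> 32 * real m ^ 5 / real R"
proof -
  have "(\<Sum>B\<in>triangle_slope_sets m R M. (real (2 * m) / real R) ^ card B)
      = real (card (triangle_slope_sets m R M)) * (real (2 * m) / real R) ^ 3"
    by (simp add: card_mem_triangle_slope_sets)
  also have "\<dots> \<le> real (R * R * (2 * m) * (2 * m)) * (real (2 * m) / real R) ^ 3"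
    by (intro mult_right_mono of_nat_mono card_triangle_slope_sets_le) simp
  also have "\<dots> = 32 * real m ^ 5 / real R"
    using assms by (simp add: power3_eq_cube field_simps eval_nat_numeral)
  finally show ?thesis .
qed

lemma girth_eight_slopes_avoiding_triangles:
  assumes A: "A \<subseteq> pos_nats_upto R" and avoid: "\<forall>B\<in>triangle_slope_sets m R M. \<not> B \<subseteq> A"
  shows "girth_at_least (grid m Y) (case_prod line_of ` (A \<times> nats_below M)) 8"
proof (rule girth_at_least_grid_lines)
  show "A \<times> nats_below M \<subseteq> pos_nats_upto R \<times> nats_below M" using A by auto
  fix j x a b assume "2 \<le> j" "2 * j < 8" and c: "(x, a, b) \<in> line_cycles m R M j"
  then have j: "j = 3" using line_cycles_two_empty by (cases "j = 2") auto
  show "\<not> (\<lambda>i. (a i, b i)) ` {..<j} \<subseteq> A \<times> nats_below M"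
  proof
    assume "(\<lambda>i. (a i, b i)) ` {..<j} \<subseteq> A \<times> nats_below M"
    then have "a i \<in> A" if "i < 3" for i using that unfolding j by blast
    then have "{a 0, a 1, a 2} \<subseteq> A" by simp
    moreover have "{a 0, a 1, a 2} \<in> triangle_slope_sets m R M"
      unfolding triangle_slope_sets_def using c j by (auto intro: image_eqI[where x = "(x, a, b)"])
    ultimately show False using avoid by blast
  qed
qed

lemma has_config_girth_eight:
  fixes m n :: nat
  assumes m: "m \<ge> 1" and n: "64 * m ^ 6 \<le> n"
  shows "has_config 8 n (32 * real m ^ 7)"
proof -
  define R where "R = 32 * m ^ 4"
  define F where "F = triangle_slope_sets m R (R * m)"
  have R: "R \<ge> 1" unfolding R_def using m by simp
  have "m \<le> m ^ 4" using m by (simp add: self_le_power)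
  then have t_le: "2 * m \<le> card (pos_nats_upto R)" unfolding R_def by simp
  have F_sub: "F \<subseteq> Pow (pos_nats_upto R)" unfolding F_def using triangle_slope_sets_subset by blast
  have F_nonempty: "\<forall>B\<in>F. B \<noteq> {}"
  proof
    fix B assume "B \<in> F"
    then have "card B = 3" unfolding F_def by (rule card_mem_triangle_slope_sets)
    then show "B \<noteq> {}" by auto
  qed
  obtain A where A: "A \<subseteq> pos_nats_upto R" "card A \<le> 2 * m"
    and many: "real (2 * m) - (\<Sum>B\<in>F. (real (2 * m) / real (card (pos_nats_upto R))) ^ card B)
                 \<le> real (card A)"
    and avoid: "\<forall>B\<in>F. \<not> B \<subseteq> A"
    using exists_subset_avoiding[OF finite_pos_nats_upto t_le F_sub F_nonempty] by blast
  have "32 * real m ^ 5 / real R = real m" unfolding R_def using m by (simp add: eval_nat_numeral)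
  then have "real m \<le> real (card A)"
    using many triangle_slope_sets_weight_le[OF R, of m "R * m"] unfolding F_def by simp
  define T where "T = A \<times> nats_below (R * m)"
  have card_T: "card T = card A * (R * m)" unfolding T_def by (simp add: card_cartesian_product)
  have "32 * real m ^ 7 = real m * real m * real (R * m)" unfolding R_def by (simp add: eval_nat_numeral)
  also have "\<dots> \<le> real m * real (card A) * real (R * m)"
    using \<open>real m \<le> real (card A)\<close> by (intro mult_right_mono mult_left_mono) auto
  finally have "32 * real m ^ 7 \<le> real (m * card T)" unfolding card_T by simp
  moreover have "has_config 8 n (real (m * card T))"
  proof (rule has_config_grid)
    show "T \<subseteq> pos_nats_upto R \<times> nats_below (R * m)" unfolding T_def using A by auto
    have "m * (R * m + R * m) = 64 * m ^ 6" "2 * m * (R * m) = 64 * m ^ 6"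
      unfolding R_def by algebra+
    moreover have "card T \<le> 2 * m * (R * m)" unfolding card_T using A(2) by simp
    ultimately show "m * (R * m + R * m) \<le> n" "card T \<le> n" using n by (simp_all only:)
    show "girth_at_least (grid m (R * m + R * m)) (case_prod line_of ` T) 8"
      unfolding T_def using girth_eight_slopes_avoiding_triangles A(1) avoid F_def by blast
  qed
  ultimately show ?thesis using has_config_mono by blast
qed

lemma has_config_powr_even_girth:
  assumes J: "J \<ge> 2" and e: "0 \<le> e" "e \<le> 1 / real (2 * J + 1)"
  shows "\<exists>c>0. \<forall>n. n > 1 \<longrightarrow> has_config (2 * J + 2) n (c * real n powr (1 + e))"
proof (rule has_config_powr[where K = "4 * J" and c\<^sub>0 = "real J"])
  show "has_config (2 * J + 2) n (real J * real m ^ (2 * J + 1 + 1))"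
    if "1 \<le> m" "4 * J * m ^ (2 * J + 1) \<le> n" for m n
    using has_config_even_girth[OF J that] by (simp add: numeral_2_eq_2)
qed (use J e in auto)

lemma has_config_powr_girth_eight:
  assumes "0 \<le> e" "e \<le> 1 / 6"
  shows "\<exists>c>0. \<forall>n. n > 1 \<longrightarrow> has_config 8 n (c * real n powr (1 + e))"
  using has_config_powr[of 64 6 32 e] has_config_girth_eight assms by simp

lemma exponent_le_inverse:
  fixes x :: real
  assumes "x \<ge> 4"
  shows "4 / (x ^ 2 + 6 * x - 3) \<le> 1 / (x + 4)"
proof -
  have "4 * (x + 4) \<le> x ^ 2 + 6 * x - 3"
    using assms mult_mono[OF assms assms] by (simp add: power2_eq_square)
  then show ?thesis using assms by (simp add: divide_simps)
qed

theorem theorem1p2: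
  fixes k :: nat
  assumes "odd k" and "k \<ge> 3"
  shows "\<exists>c > 0. \<forall>n :: nat. n > 1 \<longrightarrow>
           (\<exists>P L. card P = n \<and> card L = n \<and> (\<forall>l\<in>L. is_line l) \<and>
              girth_at_least P L (k + 5) \<and>
              real (card (incidences P L)) \<ge>
                c * real n powr (1 + 4 / (real k ^ 2 + 6 * real k - 3)))"
proof -
  define e where "e = 4 / (real k ^ 2 + 6 * real k - 3)"
  have "real k \<ge> 3" using assms(2) by simp
  then have "real k ^ 2 + 6 * real k - 3 > 0" using zero_le_power2[of "real k"] by linarith
  then have e: "0 \<le> e" unfolding e_def by simp
  have "\<exists>c>0. \<forall>n. n > 1 \<longrightarrow> has_config (k + 5) n (c * real n powr (1 + e))"
  proof (cases "k = 3")
    case True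
    then show ?thesis using has_config_powr_girth_eight[OF e] unfolding e_def by simp
  next
    case False
    define J where "J = (k + 3) div 2"
    have J: "k + 5 = 2 * J + 2" "J \<ge> 2" "real (2 * J + 1) = real k + 4"
      using assms False unfolding J_def by auto
    have "e \<le> 1 / (real k + 4)"
      unfolding e_def using assms(2) False by (intro exponent_le_inverse) auto
    then have "e \<le> 1 / real (2 * J + 1)" unfolding J(3) .
    then show ?thesis unfolding J(1) by (rule has_config_powr_even_girth[OF J(2) e])
  qed
  then show ?thesis unfolding has_config_def e_def by blast
qed

end
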